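(* Let $r\ge 2$ and let $\mathcal{H}=\{H_1,\ldots,H_n\}$ be a collection of $n$ matchings, each of size $N$, in an $r$-uniform hypergraph. Let $m$ be the size of a maximum rainbow matching for $\mathcal{H}$. Then $$(n-m)\frac{2N-(r+1)m}{r-1}\leq\frac12\binom{2r}{r}m.$$
   Context: A hypergraph is $r$-uniform if every edge contains exactly $r$ vertices. A matching is a set of pairwise vertex-disjoint edges. Given a collection (repetitions allowed) of matchings $H_1,\dots,H_n$ in a hypergraph, a matching $M\subseteq \bigcup_{i=1}^n H_i$ is rainbow if there is an injection $\phi:M\to[n]$ such that every edge $e\in M$ belongs to $H_{\phi(e)}$. *)

theory Defs
  imports Complex_Main
begin

definition matching :: "'v set set \<Rightarrow> bool" where
  "matching M \<longleftrightarrow> (\<forall>e\<in>M. \<forall>f\<in>M. e \<noteq> f \<longrightarrow> e \<inter> f = {})"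

definition uniform :: "nat \<Rightarrow> 'v set set \<Rightarrow> bool" where
  "uniform r E \<longleftrightarrow> (\<forall>e\<in>E. finite e \<and> card e = r)"

text \<open>The collection is H 1, ..., H n (indexed by {1..n}, repetitions allowed).\<close>
definition rainbow_matching :: "nat \<Rightarrow> (nat \<Rightarrow> 'v set set) \<Rightarrow> 'v set set \<Rightarrow> bool" where
  "rainbow_matching n H M \<longleftrightarrow> matching M \<and> M \<subseteq> (\<Union>i\<in>{1..n}. H i) \<and>
     (\<exists>\<phi>. inj_on \<phi> M \<and> \<phi> ` M \<subseteq> {1..n} \<and> (\<forall>e\<in>M. e \<in> H (\<phi> e)))"

definition max_rainbow :: "nat \<Rightarrow> (nat \<Rightarrow> 'v set set) \<Rightarrow> nat" where
  "max_rainbow n H = Max {card M | M. rainbow_matching n H M}"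

end

theory Submission
  imports Defs
begin

(* Let M be a maximum rainbow matching, m = card M, and call an edge f of an unused colour j private
   to e \<in> M if f meets e and no other edge of M. By maximality every edge of H j meets \<Union>M, and
   it meets \<Union>M in at least two vertices unless it is private; since card (\<Union>M) \<le> r m, counting
   vertices shows that at least (2N - (r+1) m)/(r-1) edges e of M have two private edges of colour j.
   Conversely, by maximality, private edges of e in two different unused colours intersect (else
   they could replace e). So for a fixed e, the unused colours with two (disjoint) private edges
   a, b of e yield a cross-intersecting system of pairs (a, b), (b, a) of r-sets, and Bollobas'
   inequality bounds their number by binom(2r, r)/2. Double counting the incidences between unused
   colours and edges of M gives the theorem. *)

lemma inverse_binomial_absorb:
  assumes "1 \<le> b"
  shows "real b / real (a + (b - 1) choose a) = real (a + b) / real (a + b choose a)"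
proof -
  have "(a + b - a) * (a + b choose a) = (a + b) * (a + b - 1 choose a)"
    by (rule binomial_absorb_comp)
  with assms have "real b * real (a + b choose a) = real (a + b) * real (a + (b - 1) choose a)"
    by (metis add_diff_cancel_left' Nat.add_diff_assoc of_nat_mult)
  then show ?thesis
    by (simp add: field_simps)
qed

lemma sum_inverse_binomial_remove_point:
  assumes "finite X" "A \<subseteq> X" "B \<subseteq> X" "A \<inter> B = {}" "B \<noteq> {}"
  shows "(\<Sum>x\<in>X - A. 1 / real (card A + card (B - {x}) choose card A))
           = real (card X) / real (card A + card B choose card A)"
proof -
  let ?a = "card A" and ?b = "card B"
  let ?g = "\<lambda>x. 1 / real (?a + card (B - {x}) choose ?a)"
  have fin: "finite A" "finite B"
    using assms finite_subset by blast+
  have "1 \<le> ?b"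
    using assms(5) fin by (simp add: Suc_le_eq card_gt_0_iff)
  have "card (X - A - B) = card (X - A) - ?b"
    using assms fin by (intro card_Diff_subset) auto
  then have card_rest: "card (X - A - B) = card X - ?a - ?b"
    using assms fin by (simp add: card_Diff_subset)
  have card_AB: "?a + ?b \<le> card X"
    using assms fin by (metis card_Un_disjoint card_mono le_sup_iff)
  have "(\<Sum>x\<in>X - A. ?g x) = (\<Sum>x\<in>B. ?g x) + (\<Sum>x\<in>X - A - B. ?g x)"
    using sum.subset_diff[OF _ finite_Diff[OF assms(1)], of B, where g = ?g] assms(3,4)
    by (simp only: add.commute) blast
  also have "(\<Sum>x\<in>B. ?g x) = real ?b / real (?a + (?b - 1) choose ?a)"
    using fin by simp
  also have "\<dots> = real (?a + ?b) / real (?a + ?b choose ?a)"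
    using \<open>1 \<le> ?b\<close> by (rule inverse_binomial_absorb)
  also have "(\<Sum>x\<in>X - A - B. ?g x) = real (card X - ?a - ?b) / real (?a + ?b choose ?a)"
    using card_rest by simp
  finally show ?thesis
    using card_AB by (simp add: add_divide_distrib[symmetric])
qed

text \<open>Bollobas' inequality for set pairs, by Lubell-style induction: deleting a point x of the
  ground set keeps the pairs with x not in A i (with x removed from B i), and summing the
  induction hypothesis over all x counts each pair exactly card X times.\<close>
theorem Bollobas_set_pairs_inequality:
  fixes A B :: "'i \<Rightarrow> 'a set"
  assumes "finite X" "finite I"
    and "\<And>i. i \<in> I \<Longrightarrow> A i \<subseteq> X \<and> B i \<subseteq> X \<and> A i \<inter> B i = {}"
    and "\<And>i k. i \<in> I \<Longrightarrow> k \<in> I \<Longrightarrow> i \<noteq> k \<Longrightarrow> A i \<inter> B k \<noteq> {}"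
  shows "(\<Sum>i\<in>I. 1 / real (card (A i) + card (B i) choose card (A i))) \<le> 1"
  using assms
proof (induction "card X" arbitrary: X I B rule: less_induct)
  case less
  let ?w = "\<lambda>B i. 1 / real (card (A i) + card (B i) choose card (A i))"
  show ?case
  proof (cases "\<exists>i\<in>I. B i = {}")
    case True
    then obtain i where "i \<in> I" "B i = {}"
      by blast
    with less.prems(4) have "I = {i}"
      by blast
    with \<open>B i = {}\<close> show ?thesis
      by simp
  next
    case False
    show ?thesis
    proof (cases "I = {}")
      case False
      with \<open>\<not> (\<exists>i\<in>I. B i = {})\<close> less.prems(3) have "X \<noteq> {}"
        by blast
      let ?B' = "\<lambda>x i. B i - {x}"
      have IH: "(\<Sum>i\<in>{i\<in>I. x \<notin> A i}. ?w (?B' x) i) \<le> 1" if "x \<in> X" for x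
      proof (rule less.hyps[of "X - {x}"])
        show "card (X - {x}) < card X"
          using that less.prems(1) by (rule card_Diff1_less[rotated])
      qed (use less.prems in force)+
      have "(\<Sum>i\<in>I. \<Sum>x\<in>X - A i. ?w (?B' x) i) = (\<Sum>x\<in>X. \<Sum>i\<in>{i\<in>I. x \<notin> A i}. ?w (?B' x) i)"
        using sum.swap_restrict[OF less.prems(2,1)] by (simp add: set_diff_eq)
      also have "\<dots> \<le> (\<Sum>x\<in>X. 1)"
        by (rule sum_mono) (rule IH)
      also have "(\<Sum>i\<in>I. \<Sum>x\<in>X - A i. ?w (?B' x) i) = real (card X) * (\<Sum>i\<in>I. ?w B i)"
        using less.prems(1,3) \<open>\<not> (\<exists>i\<in>I. B i = {})\<close>
        by (simp add: sum_distrib_left sum_inverse_binomial_remove_point)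
      finally show ?thesis
        using \<open>X \<noteq> {}\<close> less.prems(1) by (simp add: card_gt_0_iff)
    qed simp
  qed
qed

corollary Bollobas_set_pairs_uniform:
  fixes A B :: "'i \<Rightarrow> 'a set"
  assumes "finite I"
    and sizes: "\<And>i. i \<in> I \<Longrightarrow> finite (A i) \<and> finite (B i) \<and> card (A i) = r \<and> card (B i) = r"
    and "\<And>i. i \<in> I \<Longrightarrow> A i \<inter> B i = {}"
    and "\<And>i k. i \<in> I \<Longrightarrow> k \<in> I \<Longrightarrow> i \<noteq> k \<Longrightarrow> A i \<inter> B k \<noteq> {}"
  shows "card I \<le> 2 * r choose r"
proof -
  have "(\<Sum>i\<in>I. 1 / real (card (A i) + card (B i) choose card (A i))) \<le> 1"
    by (rule Bollobas_set_pairs_inequality[of "\<Union>i\<in>I. A i \<union> B i"]) (use assms in auto)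
  also have "(\<Sum>i\<in>I. 1 / real (card (A i) + card (B i) choose card (A i))) = card I / real (2 * r choose r)"
    using sizes by (simp add: mult_2)
  finally show ?thesis
    by (simp add: field_simps)
qed

lemma two_le_cardE:
  assumes "2 \<le> card A"
  obtains x y where "x \<in> A" "y \<in> A" "x \<noteq> y"
proof -
  have "finite A" "\<not> card A \<le> Suc 0"
    using assms card.infinite by fastforce+
  then show ?thesis
    using that card_le_Suc0_iff_eq by blast
qed

text \<open>Two disjoint members a, b of each family give the pairs (a, b) and (b, a) of a
  cross-intersecting set-pair system.\<close>
lemma card_cross_intersecting_families_le:
  fixes P :: "'i \<Rightarrow> 'v set set"
  assumes "finite S" "0 < r"
    and families: "\<And>j. j \<in> S \<Longrightarrow> 2 \<le> card (P j) \<and> matching (P j) \<and> uniform r (P j)"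
    and cross: "\<And>j k f g. j \<in> S \<Longrightarrow> k \<in> S \<Longrightarrow> j \<noteq> k \<Longrightarrow> f \<in> P j \<Longrightarrow> g \<in> P k \<Longrightarrow> f \<inter> g \<noteq> {}"
  shows "2 * card S \<le> 2 * r choose r"
proof -
  have "\<forall>j\<in>S. \<exists>ab. fst ab \<in> P j \<and> snd ab \<in> P j \<and> fst ab \<noteq> snd ab"
    using families by (metis two_le_cardE fst_conv snd_conv)
  then obtain ab where ab: "\<forall>j\<in>S. fst (ab j) \<in> P j \<and> snd (ab j) \<in> P j \<and> fst (ab j) \<noteq> snd (ab j)"
    by (metis bchoice)
  define A where "A = (\<lambda>(j, t). if t then fst (ab j) else snd (ab j))"
  define B where "B = (\<lambda>(j, t). if t then snd (ab j) else fst (ab j))"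
  define I where "I = S \<times> (UNIV :: bool set)"
  have in_P: "fst i \<in> S \<and> A i \<in> P (fst i) \<and> B i \<in> P (fst i) \<and> A i \<noteq> B i" if "i \<in> I" for i
    using that ab by (auto simp: I_def A_def B_def split: prod.splits)
  have r_sets: "finite f \<and> card f = r" if "j \<in> S" "f \<in> P j" for j f
    using families that by (auto simp: uniform_def)
  have "card I \<le> 2 * r choose r"
  proof (rule Bollobas_set_pairs_uniform)
    show "finite I"
      using \<open>finite S\<close> by (simp add: I_def)
  next
    fix i assume "i \<in> I"
    with in_P r_sets show "finite (A i) \<and> finite (B i) \<and> card (A i) = r \<and> card (B i) = r"
      by blast
    from \<open>i \<in> I\<close> in_P families show "A i \<inter> B i = {}"
      unfolding matching_def by blast
  next
    fix i k assume "i \<in> I" "k \<in> I" "i \<noteq> k"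
    show "A i \<inter> B k \<noteq> {}"
    proof (cases "fst i = fst k")
      case True
      with \<open>i \<noteq> k\<close> have "A i = B k"
        by (auto simp: A_def B_def split: prod.splits)
      moreover have "card (A i) = r" "finite (A i)"
        using in_P[OF \<open>i \<in> I\<close>] r_sets by auto
      ultimately show ?thesis
        using \<open>0 < r\<close> by auto
    next
      case False
      then show ?thesis
        using cross in_P \<open>i \<in> I\<close> \<open>k \<in> I\<close> by blast
    qed
  qed
  then show ?thesis
    using \<open>finite S\<close> by (simp add: I_def card_cartesian_product)
qed

lemma sum_card_Collect_swap:
  assumes "finite A" "finite B"
  shows "(\<Sum>a\<in>A. card {b\<in>B. R a b}) = (\<Sum>b\<in>B. card {a\<in>A. R a b})"
proof -
  have "(\<Sum>a\<in>A. card {b\<in>B. R a b}) = (\<Sum>a\<in>A. \<Sum>b\<in>B. of_bool (R a b))"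
    using assms(2) by (simp add: Collect_conj_eq)
  also have "\<dots> = (\<Sum>b\<in>B. \<Sum>a\<in>A. of_bool (R a b))"
    by (rule sum.swap)
  also have "\<dots> = (\<Sum>b\<in>B. card {a\<in>A. R a b})"
    using assms(1) by (simp add: Collect_conj_eq)
  finally show ?thesis .
qed

lemma matching_subset: "matching M \<Longrightarrow> M' \<subseteq> M \<Longrightarrow> matching M'"
  unfolding matching_def by blast

lemma matching_insert: "matching M \<Longrightarrow> (\<And>e. e \<in> M \<Longrightarrow> f \<inter> e = {}) \<Longrightarrow> matching (insert f M)"
  unfolding matching_def by blast

lemma sum_card_Int_le_card:
  assumes "matching F" "finite V"
  shows "(\<Sum>f\<in>F. card (f \<inter> V)) \<le> card V"
proof (cases "finite F")
  case True
  have "(\<Sum>f\<in>F. card (f \<inter> V)) = card (\<Union>f\<in>F. f \<inter> V)"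
    using True assms by (intro card_UN_disjoint[symmetric]) (auto simp: matching_def)
  also have "\<dots> \<le> card V"
    using assms(2) by (intro card_mono) auto
  finally show ?thesis .
qed simp

lemma card_edges_meeting_le:
  assumes "matching F" "finite e"
  shows "card {f\<in>F. f \<inter> e \<noteq> {}} \<le> card e"
proof (cases "finite {f\<in>F. f \<inter> e \<noteq> {}}")
  case True
  have "card {f\<in>F. f \<inter> e \<noteq> {}} = (\<Sum>f\<in>{f\<in>F. f \<inter> e \<noteq> {}}. 1)"
    by simp
  also have "\<dots> \<le> (\<Sum>f\<in>{f\<in>F. f \<inter> e \<noteq> {}}. card (f \<inter> e))"
    using assms(2) by (intro sum_mono) (simp add: Suc_le_eq card_gt_0_iff)
  also have "\<dots> \<le> card e"
    using matching_subset[OF assms(1)] assms(2) by (intro sum_card_Int_le_card) auto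
  finally show ?thesis .
qed simp

definition private_edges :: "'v set set \<Rightarrow> 'v set set \<Rightarrow> 'v set \<Rightarrow> 'v set set" where
  "private_edges F M e = {f\<in>F. f \<inter> e \<noteq> {} \<and> (\<forall>e'\<in>M. e' \<noteq> e \<longrightarrow> f \<inter> e' = {})}"

lemma card_private_edges_le:
  assumes "matching F" "finite e"
  shows "card (private_edges F M e) \<le> card e"
proof -
  have "matching (private_edges F M e)"
    using assms(1) by (rule matching_subset) (auto simp: private_edges_def)
  then have "card {f\<in>private_edges F M e. f \<inter> e \<noteq> {}} \<le> card e"
    using assms(2) by (rule card_edges_meeting_le)
  moreover have "{f\<in>private_edges F M e. f \<inter> e \<noteq> {}} = private_edges F M e"
    by (auto simp: private_edges_def)
  ultimately show ?thesis
    by (simp only:)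
qed

lemma two_le_card_Int_Union_unless_private:
  assumes "matching M" "finite (\<Union>M)" "f \<in> F" "f \<inter> \<Union>M \<noteq> {}"
  shows "2 \<le> card (f \<inter> \<Union>M) + of_bool (\<exists>e\<in>M. f \<in> private_edges F M e)"
proof -
  obtain e where e: "e \<in> M" "f \<inter> e \<noteq> {}"
    using assms(4) by blast
  show ?thesis
  proof (cases "\<exists>e\<in>M. f \<in> private_edges F M e")
    case True
    with e assms(2) have "card (f \<inter> \<Union>M) \<noteq> 0"
      by auto
    with True show ?thesis
      by simp
  next
    case False
    with e assms(3) obtain e' where e': "e' \<in> M" "e' \<noteq> e" "f \<inter> e' \<noteq> {}"
      unfolding private_edges_def by blast
    with e obtain x y where "x \<in> f \<inter> e" "y \<in> f \<inter> e'"
      by blast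
    moreover have "e \<inter> e' = {}"
      using assms(1) e(1) e' unfolding matching_def by blast
    ultimately have "x \<noteq> y" "{x, y} \<subseteq> f \<inter> \<Union>M"
      using e(1) e'(1) by blast+
    then show ?thesis
      using card_mono[OF _ \<open>{x, y} \<subseteq> f \<inter> \<Union>M\<close>] assms(2) by simp
  qed
qed

lemma double_card_matching_le:
  assumes "matching F" "finite F" "matching M" "finite M" "uniform r M"
    and meets: "\<And>f. f \<in> F \<Longrightarrow> f \<inter> \<Union>M \<noteq> {}"
  shows "2 * card F \<le> (r + 1) * card M + (r - 1) * card {e\<in>M. 2 \<le> card (private_edges F M e)}"
proof -
  let ?V = "\<Union>M" and ?P = "private_edges F M"
  define Priv where "Priv = (\<Union>e\<in>M. ?P e)"
  have "finite ?V"
    using assms(4,5) by (auto simp: uniform_def)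
  have "Priv \<subseteq> F"
    by (auto simp: Priv_def private_edges_def)
  have two_le: "2 \<le> card (f \<inter> ?V) + of_bool (f \<in> Priv)" if "f \<in> F" for f
    using two_le_card_Int_Union_unless_private[OF assms(3) \<open>finite ?V\<close> that meets[OF that]]
    by (simp add: Priv_def)
  have "2 * card F = (\<Sum>f\<in>F. 2)"
    by simp
  also have "\<dots> \<le> (\<Sum>f\<in>F. card (f \<inter> ?V) + of_bool (f \<in> Priv))"
    by (rule sum_mono) (rule two_le)
  also have "\<dots> = (\<Sum>f\<in>F. card (f \<inter> ?V)) + card Priv"
    using assms(2) \<open>Priv \<subseteq> F\<close> by (simp add: sum.distrib Int_absorb1)
  also have "(\<Sum>f\<in>F. card (f \<inter> ?V)) \<le> card ?V"
    using assms(1) \<open>finite ?V\<close> by (rule sum_card_Int_le_card)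
  also have "card ?V \<le> r * card M"
    using card_Union_le_sum_card[of M] assms(5) by (simp add: uniform_def mult.commute)
  also have "card Priv \<le> (\<Sum>e\<in>M. card (?P e))"
    unfolding Priv_def using assms(4) by (rule card_UN_le)
  also have "\<dots> \<le> (\<Sum>e\<in>M. 1 + of_bool (2 \<le> card (?P e)) * (r - 1))"
  proof (rule sum_mono)
    fix e assume "e \<in> M"
    with assms(5) have "finite e" "card e = r"
      by (auto simp: uniform_def)
    with assms(1) have "card (?P e) \<le> r"
      using card_private_edges_le by metis
    then show "card (?P e) \<le> 1 + of_bool (2 \<le> card (?P e)) * (r - 1)"
      by auto
  qed
  also have "\<dots> = card M + (r - 1) * card {e\<in>M. 2 \<le> card (?P e)}"
    using assms(4) by (simp only: sum.distrib) (simp add: Collect_conj_eq mult.commute)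
  finally show ?thesis
    by (simp add: algebra_simps)
qed

definition rainbow_colouring :: "nat \<Rightarrow> (nat \<Rightarrow> 'v set set) \<Rightarrow> 'v set set \<Rightarrow> ('v set \<Rightarrow> nat) \<Rightarrow> bool" where
  "rainbow_colouring n H M \<phi> \<longleftrightarrow> inj_on \<phi> M \<and> \<phi> ` M \<subseteq> {1..n} \<and> (\<forall>e\<in>M. e \<in> H (\<phi> e))"

lemma rainbow_matching_iff: "rainbow_matching n H M \<longleftrightarrow> matching M \<and> (\<exists>\<phi>. rainbow_colouring n H M \<phi>)"
  unfolding rainbow_matching_def rainbow_colouring_def by blast

lemma rainbow_colouring_subset:
  "rainbow_colouring n H M \<phi> \<Longrightarrow> M' \<subseteq> M \<Longrightarrow> rainbow_colouring n H M' \<phi>"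
  unfolding rainbow_colouring_def by (auto intro: inj_on_subset)

lemma rainbow_colouring_insert:
  assumes "rainbow_colouring n H M \<phi>" "j \<in> {1..n}" "j \<notin> \<phi> ` M" "f \<in> H j" "f \<notin> M"
  shows "rainbow_colouring n H (insert f M) (\<phi>(f := j))"
  using assms unfolding rainbow_colouring_def by (auto simp: inj_on_def)

lemma max_rainbow_attained:
  assumes "finite (\<Union>i\<in>{1..n}. H i)"
  obtains M where "rainbow_matching n H M" "card M = max_rainbow n H"
    "\<And>M'. rainbow_matching n H M' \<Longrightarrow> card M' \<le> card M"
proof -
  let ?C = "{card M | M. rainbow_matching n H M}"
  have "?C \<subseteq> {..card (\<Union>i\<in>{1..n}. H i)}"
    using assms by (auto simp: rainbow_matching_def intro: card_mono)
  then have "finite ?C"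
    by (rule finite_subset) simp
  have "rainbow_matching n H {}"
    by (simp add: rainbow_matching_def matching_def)
  with \<open>finite ?C\<close> have "max_rainbow n H \<in> ?C"
    unfolding max_rainbow_def by (intro Max_in) auto
  moreover have "card M' \<le> max_rainbow n H" if "rainbow_matching n H M'" for M'
    unfolding max_rainbow_def using \<open>finite ?C\<close> that by (intro Max_ge) auto
  ultimately show ?thesis
    using that by auto
qed

locale maximum_rainbow_matching =
  fixes n :: nat and H :: "nat \<Rightarrow> 'v set set" and r :: nat
    and M :: "'v set set" and \<phi> :: "'v set \<Rightarrow> nat"
  assumes r_pos: "0 < r"
    and uniform_H: "uniform r (\<Union>i\<in>{1..n}. H i)"
    and matching_H: "\<And>i. i \<in> {1..n} \<Longrightarrow> matching (H i)"
    and finite_H: "\<And>i. i \<in> {1..n} \<Longrightarrow> finite (H i)"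
    and matching_M: "matching M"
    and colouring: "rainbow_colouring n H M \<phi>"
    and maximum: "\<And>M'. rainbow_matching n H M' \<Longrightarrow> card M' \<le> card M"
begin

definition unused :: "nat set" where
  "unused = {1..n} - \<phi> ` M"

lemma unused_colour: "j \<in> unused \<Longrightarrow> j \<in> {1..n} \<and> j \<notin> \<phi> ` M"
  by (simp add: unused_def)

lemma uniform_M: "uniform r M"
  using uniform_H colouring unfolding uniform_def rainbow_colouring_def by blast

lemma finite_M: "finite M"
proof -
  have "M \<subseteq> (\<Union>i\<in>{1..n}. H i)"
    using colouring unfolding rainbow_colouring_def by blast
  then show ?thesis
    using finite_H by (meson finite_UN_I finite_atLeastAtMost finite_subset)
qed

lemma card_used_colours: "card (\<phi> ` M) = card M"
  using colouring by (simp add: rainbow_colouring_def card_image)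

lemma card_unused: "card unused = n - card M"
  using colouring card_used_colours finite_M
  by (simp add: unused_def rainbow_colouring_def card_Diff_subset)

lemma card_M_le: "card M \<le> n"
  using colouring card_mono[of "{1..n}" "\<phi> ` M"] card_used_colours
  by (simp add: rainbow_colouring_def)

lemma finite_unused: "finite unused"
  by (simp add: unused_def)

lemma edge_nonempty: "j \<in> {1..n} \<Longrightarrow> f \<in> H j \<Longrightarrow> f \<noteq> {}"
  using uniform_H r_pos unfolding uniform_def by fastforce

lemma unused_edge_meets_M:
  assumes "j \<in> unused" "f \<in> H j"
  shows "f \<inter> \<Union>M \<noteq> {}"
proof
  assume disjoint: "f \<inter> \<Union>M = {}"
  have "f \<notin> M"
    using disjoint edge_nonempty assms unused_colour by blast
  have "matching (insert f M)"
    using matching_M by (rule matching_insert) (use disjoint in blast)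
  moreover have "rainbow_colouring n H (insert f M) (\<phi>(f := j))"
    by (rule rainbow_colouring_insert[OF colouring _ _ assms(2) \<open>f \<notin> M\<close>]) (use assms(1) unused_colour in auto)
  ultimately have "rainbow_matching n H (insert f M)"
    by (auto simp: rainbow_matching_iff)
  with maximum have "card (insert f M) \<le> card M"
    by blast
  with \<open>f \<notin> M\<close> finite_M show False
    by simp
qed

lemma private_edges_intersect:
  assumes "e \<in> M" "j \<in> unused" "k \<in> unused" "j \<noteq> k"
    and "f \<in> private_edges (H j) M e" "g \<in> private_edges (H k) M e"
  shows "f \<inter> g \<noteq> {}"
proof
  assume "f \<inter> g = {}"
  let ?M0 = "M - {e}"
  have "f \<in> H j" "g \<in> H k" "\<And>e'. e' \<in> ?M0 \<Longrightarrow> f \<inter> e' = {} \<and> g \<inter> e' = {}"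
    using assms(5,6) by (auto simp: private_edges_def)
  moreover have "f \<noteq> {}" "g \<noteq> {}"
    using edge_nonempty unused_colour assms(2,3) \<open>f \<in> H j\<close> \<open>g \<in> H k\<close> by blast+
  ultimately have "g \<notin> ?M0" "f \<notin> insert g ?M0"
    using \<open>f \<inter> g = {}\<close> by blast+
  have "rainbow_colouring n H ?M0 \<phi>"
    using colouring by (rule rainbow_colouring_subset) blast
  then have colouring_g: "rainbow_colouring n H (insert g ?M0) (\<phi>(g := k))"
    by (rule rainbow_colouring_insert) (use assms(3) unused_colour \<open>g \<in> H k\<close> \<open>g \<notin> ?M0\<close> in auto)
  have j_fresh: "j \<notin> (\<phi>(g := k)) ` insert g ?M0"
    using assms(2,4) unused_colour \<open>g \<notin> ?M0\<close> by (auto simp: image_iff)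
  have "rainbow_colouring n H (insert f (insert g ?M0)) (\<phi>(g := k, f := j))"
    by (rule rainbow_colouring_insert[OF colouring_g _ j_fresh \<open>f \<in> H j\<close> \<open>f \<notin> insert g ?M0\<close>])
      (use assms(2) unused_colour in auto)
  moreover have "matching (insert f (insert g ?M0))"
    using matching_subset[OF matching_M, of ?M0] \<open>f \<inter> g = {}\<close> \<open>\<And>e'. e' \<in> ?M0 \<Longrightarrow> f \<inter> e' = {} \<and> g \<inter> e' = {}\<close>
    by (intro matching_insert) auto
  ultimately have "card (insert f (insert g ?M0)) \<le> card M"
    by (intro maximum) (auto simp: rainbow_matching_iff)
  moreover have "card (insert f (insert g ?M0)) = card M + 1"
    using finite_M assms(1) \<open>g \<notin> ?M0\<close> \<open>f \<notin> insert g ?M0\<close> card_gt_0_iff[of M] by auto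
  ultimately show False
    by simp
qed

lemma unused_colour_count:
  assumes "j \<in> unused"
  shows "2 * card (H j) \<le> (r + 1) * card M + (r - 1) * card {e\<in>M. 2 \<le> card (private_edges (H j) M e)}"
  by (rule double_card_matching_le)
    (use assms unused_colour matching_H finite_H matching_M finite_M uniform_M unused_edge_meets_M in auto)

lemma crowded_colours_count:
  assumes "e \<in> M"
  shows "2 * card {j\<in>unused. 2 \<le> card (private_edges (H j) M e)} \<le> 2 * r choose r"
proof (rule card_cross_intersecting_families_le)
  show "finite {j\<in>unused. 2 \<le> card (private_edges (H j) M e)}"
    using finite_unused by simp
  fix j assume j: "j \<in> {j\<in>unused. 2 \<le> card (private_edges (H j) M e)}"
  then have "j \<in> {1..n}"
    using unused_colour by blast
  have "private_edges (H j) M e \<subseteq> H j"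
    by (auto simp: private_edges_def)
  with \<open>j \<in> {1..n}\<close> have "matching (private_edges (H j) M e)" "uniform r (private_edges (H j) M e)"
    using matching_subset[OF matching_H] uniform_H by (auto simp: uniform_def)
  with j show "2 \<le> card (private_edges (H j) M e) \<and> matching (private_edges (H j) M e) \<and> uniform r (private_edges (H j) M e)"
    by simp
qed (use r_pos assms private_edges_intersect in auto)

lemma unused_colours_bound:
  assumes "\<And>j. j \<in> {1..n} \<Longrightarrow> card (H j) = N"
  shows "(real n - real (card M)) * (2 * real N - (real r + 1) * real (card M))
           \<le> (real r - 1) * (1/2 * real (2 * r choose r) * real (card M))"
proof -
  let ?crowded = "\<lambda>j e. 2 \<le> card (private_edges (H j) M e)"
  have double_count: "(\<Sum>j\<in>unused. card {e\<in>M. ?crowded j e}) = (\<Sum>e\<in>M. card {j\<in>unused. ?crowded j e})"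
    using finite_unused finite_M by (rule sum_card_Collect_swap)
  let ?K = "2 * real N - (real r + 1) * real (card M)"
  have per_colour: "?K \<le> (real r - 1) * card {e\<in>M. ?crowded j e}"
    if j: "j \<in> unused" for j
  proof -
    have "2 * N \<le> (r + 1) * card M + (r - 1) * card {e\<in>M. ?crowded j e}"
      using unused_colour_count[OF j] assms unused_colour[OF j] by simp
    then have "real (2 * N) \<le> real ((r + 1) * card M + (r - 1) * card {e\<in>M. ?crowded j e})"
      by (simp only: of_nat_le_iff)
    moreover have "real (r - 1) = real r - 1"
      using r_pos by simp
    ultimately show ?thesis
      by (simp only: of_nat_add of_nat_mult of_nat_numeral of_nat_1)
  qed
  have per_edge: "real (card {j\<in>unused. ?crowded j e}) \<le> 1/2 * real (2 * r choose r)" if "e \<in> M" for e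
    using crowded_colours_count[OF that] by linarith
  have "real (card unused) * ?K = (\<Sum>j\<in>unused. ?K)"
    by simp
  also have "\<dots> \<le> (\<Sum>j\<in>unused. (real r - 1) * card {e\<in>M. ?crowded j e})"
    by (rule sum_mono) (rule per_colour)
  also have "\<dots> = (real r - 1) * (\<Sum>e\<in>M. real (card {j\<in>unused. ?crowded j e}))"
    by (simp only: sum_distrib_left[symmetric] of_nat_sum[symmetric] double_count)
  also have "\<dots> \<le> (real r - 1) * (\<Sum>e\<in>M. 1/2 * real (2 * r choose r))"
    using r_pos per_edge by (intro mult_left_mono sum_mono) auto
  also have "\<dots> = (real r - 1) * (1/2 * real (2 * r choose r) * real (card M))"
    by simp
  finally show ?thesis
    using card_M_le by (simp add: card_unused of_nat_diff)
qed

end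

theorem lemma2p1:
  fixes H :: "nat \<Rightarrow> 'v set set" and r n N m :: nat
  assumes "r \<ge> 2"
    and "uniform r (\<Union>i\<in>{1..n}. H i)"
    and "\<And>i. i \<in> {1..n} \<Longrightarrow> matching (H i) \<and> finite (H i) \<and> card (H i) = N"
    and "m = max_rainbow n H"
  shows "(real n - real m) * ((2 * real N - (real r + 1) * real m) / (real r - 1))
           \<le> 1/2 * real ((2*r) choose r) * real m"
proof -
  have "finite (\<Union>i\<in>{1..n}. H i)"
    using assms(3) by blast
  then obtain M where M: "rainbow_matching n H M" "card M = m"
    and maximum: "\<And>M'. rainbow_matching n H M' \<Longrightarrow> card M' \<le> card M"
    using max_rainbow_attained assms(4) by metis
  then obtain \<phi> where "matching M" "rainbow_colouring n H M \<phi>"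
    by (auto simp: rainbow_matching_iff)
  then interpret maximum_rainbow_matching n H r M \<phi>
    using assms(1-3) maximum by unfold_locales auto
  have "(real n - real m) * (2 * real N - (real r + 1) * real m) \<le> (real r - 1) * (1/2 * real (2 * r choose r) * real m)"
    using unused_colours_bound assms(3) M(2) by blast
  moreover have "0 < real r - 1"
    using assms(1) by simp
  ultimately show ?thesis
    by (simp add: field_simps)
qed

end
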